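(* Let $\Bbbk$ be a field, $n\ge2$, $q\in\Bbbk$ a primitive $n$-th root of unity, $C_n=\langle g\rangle$ the cyclic group of order $n$ and $A$ a unital associative $\Bbbk$-algebra. Let $\cdot:\Bbbk C_n\otimes A\to A$ be a partial action of $\Bbbk C_n$ on $A$. Then for each $w\in A$ such that $g^i\cdot w=q^{-i}(g^i\cdot1_A)w$ for all $0\le i\le n-1$, one has $$g^i\cdot\big(w^\ell(g^j\cdot a)w^k\big)=q^{-i(\ell+k)}(g^i\cdot1_A)w^\ell(g^{i+j}\cdot a)w^k$$ for all $a\in A$, $\ell,k\ge0$ and $0\le i,j\le n-1$; in particular $g^i\cdot w^k=q^{-ik}(g^i\cdot1_A)w^k$. Moreover, if the partial action is symmetric, then $g^i\cdot(w^\ell(g^j\cdot a)w^k)=q^{-i(\ell+k)}w^\ell(g^{i+j}\cdot a)w^k(g^i\cdot1_A)$.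
   Context: $\Bbbk C_n$ is the group Hopf algebra with $g$ group-like; exponents of $g$ are read modulo $n$. A partial action of a bialgebra $H$ on $A$ is a linear map $\cdot:H\otimes A\to A$ with $1_H\cdot a=a$, $h\cdot(ab)=(h_1\cdot a)(h_2\cdot b)$, $h\cdot(k\cdot a)=(h_1\cdot1_A)(h_2k\cdot a)$; it is symmetric if moreover $h\cdot(k\cdot a)=(h_1k\cdot a)(h_2\cdot1_A)$. *)

theory Defs
  imports Main
begin

definition k_algebra :: "('k::field \<Rightarrow> 'a::ring_1 \<Rightarrow> 'a) \<Rightarrow> bool" where
  "k_algebra smul \<longleftrightarrow>
     (\<forall>c a b. smul c (a + b) = smul c a + smul c b) \<and>
     (\<forall>c d a. smul (c + d) a = smul c a + smul d a) \<and>
     (\<forall>c d a. smul (c * d) a = smul c (smul d a)) \<and>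
     (\<forall>a. smul 1 a = a) \<and>
     (\<forall>c a b. smul c (a * b) = smul c a * b) \<and>
     (\<forall>c a b. smul c (a * b) = a * smul c b)"

text \<open>A linear map
  k C_n \<otimes> A \<rightarrow> A is the same as the family of k-linear maps act i = (g^i \<cdot> _),
  0 \<le> i < n, on the basis g^0,...,g^(n-1); since all axioms are linear in h, it suffices
  to impose them on the basis, where \<Delta>(g^i) = g^i \<otimes> g^i.  Exponents are read mod n.\<close>
definition partial_action_Cn ::
  "nat \<Rightarrow> ('k::field \<Rightarrow> 'a::ring_1 \<Rightarrow> 'a) \<Rightarrow> (nat \<Rightarrow> 'a \<Rightarrow> 'a) \<Rightarrow> bool" where
  "partial_action_Cn n smul act \<longleftrightarrow>
     (\<forall>i<n. \<forall>a b. act i (a + b) = act i a + act i b) \<and>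
     (\<forall>i<n. \<forall>c a. act i (smul c a) = smul c (act i a)) \<and>
     (\<forall>a. act 0 a = a) \<and>
     (\<forall>i<n. \<forall>a b. act i (a * b) = act i a * act i b) \<and>
     (\<forall>i<n. \<forall>j<n. \<forall>a. act i (act j a) = act i 1 * act ((i + j) mod n) a)"

definition symmetric_partial_action_Cn ::
  "nat \<Rightarrow> ('k::field \<Rightarrow> 'a::ring_1 \<Rightarrow> 'a) \<Rightarrow> (nat \<Rightarrow> 'a \<Rightarrow> 'a) \<Rightarrow> bool" where
  "symmetric_partial_action_Cn n smul act \<longleftrightarrow>
     partial_action_Cn n smul act \<and>
     (\<forall>i<n. \<forall>j<n. \<forall>a. act i (act j a) = act ((i + j) mod n) a * act i 1)"

definition primitive_root :: "nat \<Rightarrow> 'k::field \<Rightarrow> bool" where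
  "primitive_root n q \<longleftrightarrow> q ^ n = 1 \<and> (\<forall>m. 0 < m \<and> m < n \<longrightarrow> q ^ m \<noteq> 1)"

end

theory Submission
  imports Defs
begin

text \<open>Write e = g^i \<cdot> 1.  Multiplicativity of the partial action makes e a two-sided unit
  for everything in the image of g^i \<cdot> _, so the hypothesis on w forces e w e = e w, and then
  e w^l e = e w^l.  Applying g^i \<cdot> _ factorwise to w^l (g^j \<cdot> a) w^k, the inner factor becomes
  e (g^(i+j) \<cdot> a), and all idempotents e but the leftmost are absorbed.  For a symmetric
  partial action e is central, since g^i \<cdot> (g^(-i) \<cdot> x) equals both e x and x e.\<close>

lemma idempotent_absorbs_power:
  fixes e x :: "'a::monoid_mult"
  assumes "e * e = e" and "e * x * e = e * x"
  shows "e * x ^ l * e = e * x ^ l"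
proof (induction l)
  case 0
  show ?case using assms(1) by simp
next
  case (Suc l)
  have "e * x ^ Suc l * e = (e * x ^ l) * x * e"
    by (simp only: power_Suc2 mult.assoc)
  also have "\<dots> = (e * x ^ l * e) * x * e"
    by (simp only: Suc)
  also have "\<dots> = (e * x ^ l) * (e * x * e)"
    by (simp only: mult.assoc)
  also have "\<dots> = (e * x ^ l * e) * x"
    by (metis assms(2) mult.assoc)
  also have "\<dots> = e * x ^ Suc l"
    by (simp only: Suc power_Suc2 flip: mult.assoc)
  finally show ?case .
qed

locale Cn_partial_action =
  fixes n :: nat and smul :: "'k::field \<Rightarrow> 'a::ring_1 \<Rightarrow> 'a" and act :: "nat \<Rightarrow> 'a \<Rightarrow> 'a"
  assumes k_algebra: "k_algebra smul"
    and partial_action: "partial_action_Cn n smul act"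
begin

lemma smul_mult_left: "smul c a * b = smul c (a * b)"
  and smul_mult_right: "a * smul c b = smul c (a * b)"
  and smul_smul: "smul c (smul d a) = smul (c * d) a"
  and smul_one: "smul 1 a = a"
  using k_algebra unfolding k_algebra_def by metis+

lemma smul_mult_smul: "smul c a * smul d b = smul (c * d) (a * b)"
  by (simp add: smul_mult_left smul_mult_right smul_smul mult.commute)

lemma smul_cancel:
  assumes "c \<noteq> 0" and "smul c a = smul c b"
  shows "a = b"
  by (metis assms smul_smul smul_one left_inverse)

lemma act_mult: "i < n \<Longrightarrow> act i (a * b) = act i a * act i b"
  and act_act: "i < n \<Longrightarrow> j < n \<Longrightarrow> act i (act j a) = act i 1 * act ((i + j) mod n) a"
  using partial_action unfolding partial_action_Cn_def by blast+

lemma act_one_mult: "i < n \<Longrightarrow> act i 1 * act i a = act i a"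
  using act_mult[of i 1 a] by simp

lemma act_mult_one: "i < n \<Longrightarrow> act i a * act i 1 = act i a"
  using act_mult[of i a 1] by simp

context
  fixes i :: nat and c :: 'k and w :: 'a
  assumes i: "i < n" and c: "c \<noteq> 0"
    and eigen: "act i w = smul c (act i 1 * w)"
begin

lemma eigen_absorbs_act_one: "act i 1 * w * act i 1 = act i 1 * w"
proof (rule smul_cancel[OF c])
  show "smul c (act i 1 * w * act i 1) = smul c (act i 1 * w)"
    using act_mult_one[OF i, of w] by (simp add: eigen smul_mult_left)
qed

lemma eigen_power_absorbs_act_one: "act i 1 * w ^ l * act i 1 = act i 1 * w ^ l"
  using act_one_mult[OF i, of 1] eigen_absorbs_act_one by (intro idempotent_absorbs_power) simp_all

lemma act_eigen_power: "act i (w ^ l) = smul (c ^ l) (act i 1 * w ^ l)"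
proof (induction l)
  case 0
  show ?case by (simp add: smul_one)
next
  case (Suc l)
  have "act i (w ^ Suc l) = act i (w ^ l) * act i w"
    by (simp only: act_mult[OF i] power_Suc2)
  also have "\<dots> = smul (c ^ l * c) (act i 1 * w ^ l * act i 1 * w)"
    by (simp only: Suc eigen smul_mult_smul mult.assoc)
  also have "\<dots> = smul (c ^ Suc l) (act i 1 * w ^ Suc l)"
    by (metis eigen_power_absorbs_act_one power_Suc2 mult.assoc)
  finally show ?case .
qed

lemma act_eigen_sandwich:
  assumes j: "j < n"
  shows "act i (w ^ l * act j a * w ^ k)
           = smul (c ^ (l + k)) (act i 1 * w ^ l * act ((i + j) mod n) a * w ^ k)"
proof -
  let ?e = "act i 1" and ?Y = "act i (act j a)"
  have "act i (w ^ l * act j a * w ^ k) = act i (w ^ l) * ?Y * act i (w ^ k)"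
    by (simp add: act_mult[OF i])
  also have "\<dots> = smul (c ^ k * c ^ l) (?e * w ^ l * ?Y * (?e * w ^ k))"
    by (simp only: act_eigen_power smul_mult_left smul_mult_right smul_smul)
  also have "?e * w ^ l * ?Y * (?e * w ^ k) = (?e * w ^ l * ?e) * act ((i + j) mod n) a * w ^ k"
    by (metis act_mult_one[OF i, of "act j a"] act_act[OF i j] mult.assoc)
  also have "\<dots> = ?e * w ^ l * act ((i + j) mod n) a * w ^ k"
    by (simp only: eigen_power_absorbs_act_one)
  also have "c ^ k * c ^ l = c ^ (l + k)"
    by (simp add: power_add mult.commute)
  finally show ?thesis .
qed

end

end

lemma symmetric_act_one_central:
  assumes "symmetric_partial_action_Cn n smul act" and "i < n"
  shows "act i 1 * x = x * act i 1"
proof -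
  define j where "j = (n - i) mod n"
  have j: "j < n" and ij: "(i + j) mod n = 0"
    using assms(2) by (auto simp: j_def mod_if)
  have "act i (act j x) = act i 1 * act ((i + j) mod n) x"
    and "act i (act j x) = act ((i + j) mod n) x * act i 1"
    and "act 0 x = x"
    using assms j unfolding symmetric_partial_action_Cn_def partial_action_Cn_def by blast+
  then show ?thesis
    by (simp only: ij)
qed

theorem corollary3p6:
  fixes n :: nat and q :: "'k::field" and smul :: "'k \<Rightarrow> 'a::ring_1 \<Rightarrow> 'a"
    and act :: "nat \<Rightarrow> 'a \<Rightarrow> 'a" and w :: 'a
  assumes "n \<ge> 2"
    and "primitive_root n q"
    and "k_algebra smul"
    and "partial_action_Cn n smul act"
    and hw: "\<forall>i<n. act i w = smul (inverse q ^ i) (act i 1 * w)"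
  shows "(\<forall>a l k i j. i < n \<longrightarrow> j < n \<longrightarrow>
            act i (w ^ l * act j a * w ^ k)
              = smul (inverse q ^ (i * (l + k))) (act i 1 * w ^ l * act ((i + j) mod n) a * w ^ k))
       \<and> (\<forall>k i. i < n \<longrightarrow> act i (w ^ k) = smul (inverse q ^ (i * k)) (act i 1 * w ^ k))
       \<and> (symmetric_partial_action_Cn n smul act \<longrightarrow>
           (\<forall>a l k i j. i < n \<longrightarrow> j < n \<longrightarrow>
              act i (w ^ l * act j a * w ^ k)
                = smul (inverse q ^ (i * (l + k))) (w ^ l * act ((i + j) mod n) a * w ^ k * act i 1)))"
proof -
  interpret Cn_partial_action n smul act
    using assms(3,4) by unfold_locales
  have "q \<noteq> 0"
    using assms(1,2) unfolding primitive_root_def by (metis power_0_left not_numeral_le_zero zero_neq_one)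
  then have c: "inverse q ^ i \<noteq> 0" for i
    by simp
  have "act i (w ^ l * act j a * w ^ k)
      = smul (inverse q ^ (i * (l + k))) (act i 1 * w ^ l * act ((i + j) mod n) a * w ^ k)"
    if "i < n" "j < n" for a l k i j
    using act_eigen_sandwich[OF that(1) c] hw that by (simp add: power_mult)
  moreover have "act i (w ^ k) = smul (inverse q ^ (i * k)) (act i 1 * w ^ k)" if "i < n" for k i
    using act_eigen_power[OF that c] hw that by (simp add: power_mult)
  moreover have "act i 1 * w ^ l * act ((i + j) mod n) a * w ^ k
      = w ^ l * act ((i + j) mod n) a * w ^ k * act i 1"
    if "symmetric_partial_action_Cn n smul act" "i < n" for a l k i j
    using symmetric_act_one_central[OF that] by (simp add: mult.assoc)
  ultimately show ?thesis
    by simp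
qed

end
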